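(* Let $G$ be connected with weights $w:E\to\mathbb{R}_{>0}$ and let $\pi$ be a vertex order. Every metric $m$ on $G_\pi^*$ that respects $w$ and satisfies the lower triangle inequality is customized, i.e. for all $s,t\in V$ there is an up-down $s$–$t$ path in $G_\pi^*$ whose $m$-length equals $\mathrm{dist}_I(s,t)$.
   Context: Let $G=(V,E)$ be a finite simple undirected graph with $n=|V|$ vertices. A vertex order is a bijection $\pi:\{1,\dots,n\}\to V$; the rank of $v$ is $\pi^{-1}(v)$. Contracting a vertex $v$ in a graph means deleting $v$ and its incident edges and adding an edge between every pair of former neighbors of $v$ that are not already adjacent. The core graph $G_{\pi,i}$ is obtained from $G$ by contracting $\pi(1),\dots,\pi(i-1)$ in this order. $G_\pi^*$ is the graph on $V$ whose edge set is the union of the edge sets of all $G_{\pi,i}$, $i=1,\dots,n$ (i.e. $G$ together with all edges inserted during the contractions). Let $w:E\to\mathbb{R}_{>0}$ and let $\mathrm{dist}_I(s,t)$ be the shortest $s$–$t$ path length in $(G,w)$. A metric is a map $m$ assigning to every edge of $G_\pi^*$ a value in $\mathbb{R}_{>0}\cup\{\infty\}$; the $m$-length of a path in $G_\pi^*$ is the sum of $m$ over its edges. An up-down path is a path $v_0,\dots,v_k$ in $G_\pi^*$ for which there is $j$ with the ranks strictly increasing along $v_0,\dots,v_j$ and strictly decreasing along $v_j,\dots,v_k$. $\mathrm{dist}_A(s,t)$ is the minimum $m$-length of an $s$–$t$ path in $G_\pi^*$, and $\mathrm{dist}_{UD}(s,t)$ the minimum $m$-length of an up-down $s$–$t$ path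 ($\infty$ if none). The metric $m$ respects $w$ if $\mathrm{dist}_A(s,t)=\mathrm{dist}_I(s,t)$ for all $s,t$; it is customized if moreover $\mathrm{dist}_{UD}(s,t)=\mathrm{dist}_A(s,t)$ for all $s,t$. It satisfies the lower triangle inequality if for every edge $\{x,y\}$ of $G_\pi^*$ and every vertex $z$ of rank smaller than the ranks of both $x$ and $y$ that is adjacent to both $x$ and $y$ in $G_\pi^*$, $m(\{x,y\})\le m(\{x,z\})+m(\{z,y\})$. *)

theory Defs
  imports Main "HOL-Library.Extended_Real"
begin

type_synonym 'a graph = "'a set \<times> 'a set set"

definition simple_graph :: "'a graph \<Rightarrow> bool" where
  "simple_graph G \<longleftrightarrow> finite (fst G) \<and>
     (\<forall>e \<in> snd G. \<exists>x y. x \<noteq> y \<and> x \<in> fst G \<and> y \<in> fst G \<and> e = {x, y})"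

definition contract :: "'a graph \<Rightarrow> 'a \<Rightarrow> 'a graph" where
  "contract G v = (fst G - {v},
      {e \<in> snd G. v \<notin> e} \<union>
      {{x, y} | x y. x \<noteq> y \<and> {v, x} \<in> snd G \<and> {v, y} \<in> snd G})"

(* core G \<sigma> i is the core graph G_{\<sigma>,i+1}: contract \<sigma> 1, ..., \<sigma> i *)
fun core :: "'a graph \<Rightarrow> (nat \<Rightarrow> 'a) \<Rightarrow> nat \<Rightarrow> 'a graph" where
  "core G \<sigma> 0 = G"
| "core G \<sigma> (Suc i) = contract (core G \<sigma> i) (\<sigma> (Suc i))"

(* edge set of G*_pi: union of the edge sets of G_{\<sigma>,1}, ..., G_{\<sigma>,n} *)
definition chordal_edges :: "'a graph \<Rightarrow> (nat \<Rightarrow> 'a) \<Rightarrow> 'a set set" where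
  "chordal_edges G \<sigma> = (\<Union>i < card (fst G). snd (core G \<sigma> i))"

definition vertex_order :: "'a graph \<Rightarrow> (nat \<Rightarrow> 'a) \<Rightarrow> bool" where
  "vertex_order G \<sigma> \<longleftrightarrow> bij_betw \<sigma> {1..card (fst G)} (fst G)"

definition rank :: "'a graph \<Rightarrow> (nat \<Rightarrow> 'a) \<Rightarrow> 'a \<Rightarrow> nat" where
  "rank G \<sigma> v = inv_into {1..card (fst G)} \<sigma> v"

definition path_edges :: "'a list \<Rightarrow> 'a set list" where
  "path_edges p = map (\<lambda>(a, b). {a, b}) (zip p (tl p))"

definition is_path :: "'a set set \<Rightarrow> 'a list \<Rightarrow> 'a \<Rightarrow> 'a \<Rightarrow> bool" where
  "is_path E p s t \<longleftrightarrow> p \<noteq> [] \<and> hd p = s \<and> last p = t \<and> distinct p \<and>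
     set (path_edges p) \<subseteq> E"

definition path_len :: "('a set \<Rightarrow> ereal) \<Rightarrow> 'a list \<Rightarrow> ereal" where
  "path_len m p = sum_list (map m (path_edges p))"

definition connected :: "'a graph \<Rightarrow> bool" where
  "connected G \<longleftrightarrow> (\<forall>s \<in> fst G. \<forall>t \<in> fst G. \<exists>p. is_path (snd G) p s t)"

definition up_down :: "('a \<Rightarrow> nat) \<Rightarrow> 'a list \<Rightarrow> bool" where
  "up_down r p \<longleftrightarrow> (\<exists>j < length p.
      (\<forall>i. i < j \<longrightarrow> r (p ! i) < r (p ! Suc i)) \<and>
      (\<forall>i. j \<le> i \<and> Suc i < length p \<longrightarrow> r (p ! i) > r (p ! Suc i)))"

definition dist_I :: "'a graph \<Rightarrow> ('a set \<Rightarrow> real) \<Rightarrow> 'a \<Rightarrow> 'a \<Rightarrow> ereal" where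
  "dist_I G w s t = (INF p \<in> {p. is_path (snd G) p s t}. path_len (\<lambda>e. ereal (w e)) p)"

definition dist_A :: "'a graph \<Rightarrow> (nat \<Rightarrow> 'a) \<Rightarrow> ('a set \<Rightarrow> ereal) \<Rightarrow> 'a \<Rightarrow> 'a \<Rightarrow> ereal" where
  "dist_A G \<sigma> m s t = (INF p \<in> {p. is_path (chordal_edges G \<sigma>) p s t}. path_len m p)"

(* dist_UD (infimum over empty set = \<infinity>) *)
definition dist_UD :: "'a graph \<Rightarrow> (nat \<Rightarrow> 'a) \<Rightarrow> ('a set \<Rightarrow> ereal) \<Rightarrow> 'a \<Rightarrow> 'a \<Rightarrow> ereal" where
  "dist_UD G \<sigma> m s t = (INF p \<in> {p. is_path (chordal_edges G \<sigma>) p s t \<and> up_down (rank G \<sigma>) p}.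
       path_len m p)"

definition is_metric :: "'a graph \<Rightarrow> (nat \<Rightarrow> 'a) \<Rightarrow> ('a set \<Rightarrow> ereal) \<Rightarrow> bool" where
  "is_metric G \<sigma> m \<longleftrightarrow> (\<forall>e \<in> chordal_edges G \<sigma>. m e > 0)"

definition respects_w :: "'a graph \<Rightarrow> (nat \<Rightarrow> 'a) \<Rightarrow> ('a set \<Rightarrow> ereal) \<Rightarrow> ('a set \<Rightarrow> real) \<Rightarrow> bool" where
  "respects_w G \<sigma> m w \<longleftrightarrow> (\<forall>s \<in> fst G. \<forall>t \<in> fst G. dist_A G \<sigma> m s t = dist_I G w s t)"

definition customized :: "'a graph \<Rightarrow> (nat \<Rightarrow> 'a) \<Rightarrow> ('a set \<Rightarrow> ereal) \<Rightarrow> ('a set \<Rightarrow> real) \<Rightarrow> bool" where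
  "customized G \<sigma> m w \<longleftrightarrow> respects_w G \<sigma> m w \<and>
     (\<forall>s \<in> fst G. \<forall>t \<in> fst G. dist_UD G \<sigma> m s t = dist_A G \<sigma> m s t)"

definition lower_triangle :: "'a graph \<Rightarrow> (nat \<Rightarrow> 'a) \<Rightarrow> ('a set \<Rightarrow> ereal) \<Rightarrow> bool" where
  "lower_triangle G \<sigma> m \<longleftrightarrow> (\<forall>x y z. {x, y} \<in> chordal_edges G \<sigma> \<and>
      rank G \<sigma> z < rank G \<sigma> x \<and> rank G \<sigma> z < rank G \<sigma> y \<and>
      {x, z} \<in> chordal_edges G \<sigma> \<and> {z, y} \<in> chordal_edges G \<sigma> \<longrightarrow>
      m {x, y} \<le> m {x, z} + m {z, y})"

end

theory Submission
  imports Defs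
begin

text \<open>
  If two higher-ranked vertices x, y are both adjacent to z in G*, then {x, y} is an edge of
  G* as well: it is inserted when z is contracted. Hence a valley x, z, y of an s-t path
  (rank z below both neighbours) can be shortcut to x, y, and by the lower triangle
  inequality this does not increase the m-length. A path without valleys whose consecutive
  ranks differ is up-down. Shortcutting repeatedly turns a path attaining dist_A, which
  exists because the graph is connected and there are only finitely many paths, into an
  up-down path of the same length; respecting w identifies this length with dist_I.
\<close>

lemma simple_graph_edgeD:
  assumes "simple_graph G" "{x, y} \<in> snd G"
  shows "x \<noteq> y \<and> x \<in> fst G \<and> y \<in> fst G"
proof -
  obtain a b where "a \<noteq> b" "a \<in> fst G" "b \<in> fst G" "{x, y} = {a, b}"
    using assms unfolding simple_graph_def by blast
  then show ?thesis by (auto simp: doubleton_eq_iff)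
qed

lemma simple_graph_contract:
  assumes "simple_graph G"
  shows "simple_graph (contract G v)"
  unfolding simple_graph_def
proof (intro conjI ballI)
  show "finite (fst (contract G v))"
    using assms by (simp add: simple_graph_def contract_def)
next
  fix e assume "e \<in> snd (contract G v)"
  then consider "e \<in> snd G" "v \<notin> e"
    | x y where "e = {x, y}" "x \<noteq> y" "{v, x} \<in> snd G" "{v, y} \<in> snd G"
    unfolding contract_def by auto
  then show "\<exists>x y. x \<noteq> y \<and> x \<in> fst (contract G v) \<and> y \<in> fst (contract G v) \<and> e = {x, y}"
  proof cases
    case 1
    moreover obtain x y where "x \<noteq> y" "x \<in> fst G" "y \<in> fst G" "e = {x, y}"
      using assms 1(1) unfolding simple_graph_def by blast
    ultimately show ?thesis by (auto simp: contract_def)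
  next
    case 2
    then have "x \<in> fst G - {v}" "y \<in> fst G - {v}"
      using simple_graph_edgeD[OF assms] by auto
    with 2(1,2) show ?thesis by (auto simp: contract_def)
  qed
qed

lemma simple_graph_core: "simple_graph G \<Longrightarrow> simple_graph (core G \<sigma> i)"
  by (induction i) (simp_all add: simple_graph_contract)

lemma fst_core: "fst (core G \<sigma> i) = fst G - \<sigma> ` {1..i}"
proof (induction i)
  case (Suc i)
  have "{1..Suc i} = insert (Suc i) {1..i}" by auto
  then show ?case using Suc by (auto simp: contract_def)
qed simp

lemma core_edge_persists:
  assumes "i \<le> j" "e \<in> snd (core G \<sigma> i)" "\<And>k. i < k \<Longrightarrow> k \<le> j \<Longrightarrow> \<sigma> k \<notin> e"
  shows "e \<in> snd (core G \<sigma> j)"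
  using assms
proof (induction j)
  case (Suc j)
  show ?case
  proof (cases "i = Suc j")
    case False
    then have "e \<in> snd (core G \<sigma> j)" "\<sigma> (Suc j) \<notin> e" using Suc by auto
    then show ?thesis by (simp add: contract_def)
  qed (use Suc in simp)
qed simp

lemma chordal_edgeD:
  assumes "simple_graph G" "{x, y} \<in> chordal_edges G \<sigma>"
  shows "x \<noteq> y \<and> x \<in> fst G \<and> y \<in> fst G"
proof -
  obtain i where "{x, y} \<in> snd (core G \<sigma> i)"
    using assms(2) by (auto simp: chordal_edges_def)
  then have "x \<noteq> y \<and> x \<in> fst (core G \<sigma> i) \<and> y \<in> fst (core G \<sigma> i)"
    by (rule simple_graph_edgeD[OF simple_graph_core[OF assms(1)]])
  then show ?thesis by (simp add: fst_core)
qed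

lemma edges_subset_chordal_edges:
  assumes "simple_graph G" "fst G \<noteq> {}"
  shows "snd G \<subseteq> chordal_edges G \<sigma>"
proof -
  have "0 < card (fst G)" using assms by (simp add: simple_graph_def card_gt_0_iff)
  then show ?thesis unfolding chordal_edges_def by force
qed

lemma
  assumes "vertex_order G \<sigma>" "v \<in> fst G"
  shows rank_range: "rank G \<sigma> v \<in> {1..card (fst G)}"
    and sigma_rank: "\<sigma> (rank G \<sigma> v) = v"
proof -
  have "v \<in> \<sigma> ` {1..card (fst G)}"
    using assms by (simp add: vertex_order_def bij_betw_def)
  then show "rank G \<sigma> v \<in> {1..card (fst G)}" "\<sigma> (rank G \<sigma> v) = v"
    unfolding rank_def by (rule inv_into_into, rule f_inv_into_f)
qed

lemma rank_sigma:
  "vertex_order G \<sigma> \<Longrightarrow> l \<in> {1..card (fst G)} \<Longrightarrow> rank G \<sigma> (\<sigma> l) = l"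
  by (simp add: vertex_order_def rank_def bij_betw_def inv_into_f_f)

lemma inj_on_rank: "vertex_order G \<sigma> \<Longrightarrow> inj_on (rank G \<sigma>) (fst G)"
  by (rule inj_on_inverseI[where g = \<sigma>]) (rule sigma_rank)

text \<open>
  An edge of G* at z towards a higher-ranked vertex is already present when z is
  contracted: z lies in every core in which the edge occurs, and no endpoint is contracted
  before z.
\<close>

lemma chordal_edge_in_core_before_contraction:
  assumes sg: "simple_graph G" and vo: "vertex_order G \<sigma>"
    and e: "{z, u} \<in> chordal_edges G \<sigma>" and zu: "rank G \<sigma> z < rank G \<sigma> u"
  shows "{z, u} \<in> snd (core G \<sigma> (rank G \<sigma> z - 1))"
proof -
  define k where "k = rank G \<sigma> z"
  obtain i where i: "{z, u} \<in> snd (core G \<sigma> i)"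
    using e by (auto simp: chordal_edges_def)
  have "z \<in> fst (core G \<sigma> i)"
    using simple_graph_edgeD[OF simple_graph_core[OF sg] i] by blast
  then have z: "z \<in> fst G" "z \<notin> \<sigma> ` {1..i}" by (simp_all add: fst_core)
  have k: "k \<in> {1..card (fst G)}" "\<sigma> k = z"
    using rank_range[OF vo z(1)] sigma_rank[OF vo z(1)] by (auto simp: k_def)
  have "i < k" using k z(2) by (metis atLeastAtMost_iff image_eqI not_le)
  show ?thesis
  proof (rule core_edge_persists[OF _ i])
    show "i \<le> rank G \<sigma> z - 1" using \<open>i < k\<close> k_def by simp
  next
    fix l assume l: "i < l" "l \<le> rank G \<sigma> z - 1"
    then have "l \<in> {1..card (fst G)}" "l \<noteq> k" "l \<noteq> rank G \<sigma> u"
      using k zu by (auto simp: k_def)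
    moreover have "rank G \<sigma> (\<sigma> l) = l"
      using rank_sigma[OF vo \<open>l \<in> {1..card (fst G)}\<close>] .
    ultimately show "\<sigma> l \<notin> {z, u}" unfolding k_def by (metis empty_iff insert_iff)
  qed
qed

lemma chordal_edges_fill_in:
  assumes sg: "simple_graph G" and vo: "vertex_order G \<sigma>" and "x \<noteq> y"
    and xz: "{x, z} \<in> chordal_edges G \<sigma>" and zy: "{z, y} \<in> chordal_edges G \<sigma>"
    and zx_rank: "rank G \<sigma> z < rank G \<sigma> x" and zy_rank: "rank G \<sigma> z < rank G \<sigma> y"
  shows "{x, y} \<in> chordal_edges G \<sigma>"
proof -
  define k where "k = rank G \<sigma> z"
  have xz_V: "x \<in> fst G" "z \<in> fst G" using chordal_edgeD[OF sg xz] by auto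
  have k: "k \<in> {1..card (fst G)}" "\<sigma> k = z"
    using rank_range[OF vo xz_V(2)] sigma_rank[OF vo xz_V(2)] by (auto simp: k_def)
  have "k < card (fst G)"
    using rank_range[OF vo xz_V(1)] zx_rank by (simp add: k_def)
  have "{z, x} \<in> chordal_edges G \<sigma>" using xz by (simp add: insert_commute)
  then have "{z, x} \<in> snd (core G \<sigma> (k - 1))" "{z, y} \<in> snd (core G \<sigma> (k - 1))"
    using chordal_edge_in_core_before_contraction[OF sg vo] zy zx_rank zy_rank
    by (simp_all add: k_def)
  moreover have "core G \<sigma> k = contract (core G \<sigma> (k - 1)) z"
    using k core.simps(2)[of G \<sigma> "k - 1"] by simp
  ultimately have "{x, y} \<in> snd (core G \<sigma> k)"
    using \<open>x \<noteq> y\<close> unfolding contract_def by auto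
  then show ?thesis using \<open>k < card (fst G)\<close> unfolding chordal_edges_def by blast
qed

lemma path_edges_Cons_Cons: "path_edges (x # y # p) = {x, y} # path_edges (y # p)"
  by (simp add: path_edges_def)

lemma path_edges_append:
  "path_edges (xs @ y # ys) = path_edges (xs @ [y]) @ path_edges (y # ys)"
proof (induction xs)
  case (Cons a xs)
  then show ?case by (cases xs) (auto simp: path_edges_def)
qed (simp add: path_edges_def)

lemma path_edges_valley:
  "path_edges (xs @ x # z # y # ys) = path_edges (xs @ [x]) @ {x, z} # {z, y} # path_edges (y # ys)"
  using path_edges_append[of xs x "z # y # ys"] by (simp add: path_edges_Cons_Cons)

lemma set_subset_path_edges: "set p \<subseteq> insert (hd p) (\<Union> (set (path_edges p)))"
proof (induction p rule: induct_list012)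
  case (3 x y p)
  then show ?case by (auto simp: path_edges_Cons_Cons)
qed simp_all

lemma path_edge_doubleton: "e \<in> set (path_edges p) \<Longrightarrow> \<exists>a b. e = {a, b}"
  by (auto simp: path_edges_def)

lemma chordal_path_vertices:
  assumes "simple_graph G" "s \<in> fst G" "is_path (chordal_edges G \<sigma>) p s t"
  shows "set p \<subseteq> fst G"
proof -
  have "e \<subseteq> fst G" if "e \<in> set (path_edges p)" for e
    using that path_edge_doubleton[OF that] chordal_edgeD[OF assms(1)] assms(3)
    unfolding is_path_def by blast
  then show ?thesis
    using set_subset_path_edges[of p] assms(2,3) unfolding is_path_def by blast
qed

lemma finite_chordal_paths:
  assumes "simple_graph G" "s \<in> fst G"
  shows "finite {p. is_path (chordal_edges G \<sigma>) p s t}"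
proof (rule finite_subset)
  show "{p. is_path (chordal_edges G \<sigma>) p s t} \<subseteq> {p. set p \<subseteq> fst G \<and> distinct p}"
    using chordal_path_vertices[OF assms] by (auto simp: is_path_def)
  show "finite {p. set p \<subseteq> fst G \<and> distinct p}"
    using assms(1) by (simp add: simple_graph_def finite_subset_distinct)
qed

definition has_valley :: "('a \<Rightarrow> nat) \<Rightarrow> 'a list \<Rightarrow> bool" where
  "has_valley r p \<longleftrightarrow> (\<exists>xs x z y ys. p = xs @ x # z # y # ys \<and> r z < r x \<and> r z < r y)"

lemma has_valley_Cons: "has_valley r p \<Longrightarrow> has_valley r (a # p)"
  unfolding has_valley_def by (metis append_Cons)

lemma up_down_if_no_valley:
  assumes "p \<noteq> []" "distinct (map r p)" "\<not> has_valley r p"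
  shows "up_down r p"
  using assms
proof (induction p)
  case (Cons a q)
  show ?case
  proof (cases q)
    case Nil
    then show ?thesis by (auto simp: up_down_def)
  next
    case (Cons b q')
    have "up_down r q"
      using Cons.IH Cons.prems(2,3) \<open>q = b # q'\<close> has_valley_Cons[of r q a] by auto
    then obtain j where j: "j < length q" "\<forall>i < j. r (q ! i) < r (q ! Suc i)"
      "\<forall>i. j \<le> i \<and> Suc i < length q \<longrightarrow> r (q ! i) > r (q ! Suc i)"
      unfolding up_down_def by blast
    have "r a \<noteq> r b" using Cons.prems(2) \<open>q = b # q'\<close> by auto
    then consider "r a < r b" | "r b < r a" by linarith
    then show ?thesis
    proof cases
      case 1
      show ?thesis unfolding up_down_def
      proof (intro exI[of _ "Suc j"] conjI allI impI)
        show "Suc j < length (a # q)" using j(1) by simp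
      next
        fix i assume "i < Suc j"
        then show "r ((a # q) ! i) < r ((a # q) ! Suc i)"
          using 1 j(2) \<open>q = b # q'\<close> by (cases i) auto
      next
        fix i assume "Suc j \<le> i \<and> Suc i < length (a # q)"
        then show "r ((a # q) ! i) > r ((a # q) ! Suc i)" using j(3) by (cases i) auto
      qed
    next
      case 2
      have "j = 0"
      proof (rule ccontr)
        assume "j \<noteq> 0"
        then obtain c q'' where "q' = c # q''" using j(1) \<open>q = b # q'\<close> by (cases q') auto
        moreover have "r b < r c" using j(2) \<open>j \<noteq> 0\<close> \<open>q = b # q'\<close> calculation by fastforce
        ultimately have "has_valley r (a # q)"
          using 2 \<open>q = b # q'\<close> unfolding has_valley_def
          by (intro exI[of _ "[]"] exI[of _ a] exI[of _ b] exI[of _ c] exI[of _ q'']) simp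
        then show False using Cons.prems(3) by contradiction
      qed
      show ?thesis unfolding up_down_def
      proof (intro exI[of _ 0] conjI allI impI)
        fix i assume "0 \<le> i \<and> Suc i < length (a # q)"
        then show "r ((a # q) ! i) > r ((a # q) ! Suc i)"
          using 2 j(3) \<open>j = 0\<close> \<open>q = b # q'\<close> by (cases i) auto
      qed simp_all
    qed
  qed
qed simp

lemma shortcut_valley:
  assumes p: "is_path E (xs @ x # z # y # ys) s t" and xy: "{x, y} \<in> E"
    and triangle: "m {x, y} \<le> m {x, z} + m {z, y}"
  shows "is_path E (xs @ x # y # ys) s t"
    and "path_len m (xs @ x # y # ys) \<le> path_len m (xs @ x # z # y # ys)"
proof -
  have edges: "path_edges (xs @ x # y # ys) = path_edges (xs @ [x]) @ {x, y} # path_edges (y # ys)"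
    using path_edges_append[of xs x "y # ys"] by (simp add: path_edges_Cons_Cons)
  show "is_path E (xs @ x # y # ys) s t"
    using p xy unfolding is_path_def edges path_edges_valley
    by (cases xs; cases ys) auto
  have "path_len m (xs @ x # y # ys)
      = path_len m (xs @ [x]) + (m {x, y} + path_len m (y # ys))"
    by (simp add: path_len_def edges)
  also have "\<dots> \<le> path_len m (xs @ [x]) + ((m {x, z} + m {z, y}) + path_len m (y # ys))"
    using triangle by (intro add_mono) auto
  also have "\<dots> = path_len m (xs @ x # z # y # ys)"
    by (simp add: path_len_def path_edges_valley add.assoc)
  finally show "path_len m (xs @ x # y # ys) \<le> path_len m (xs @ x # z # y # ys)" .
qed

lemma exists_up_down_path_le:
  assumes sg: "simple_graph G" and vo: "vertex_order G \<sigma>" and lt: "lower_triangle G \<sigma> m"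
    and s: "s \<in> fst G"
  shows "is_path (chordal_edges G \<sigma>) p s t \<Longrightarrow>
    \<exists>q. is_path (chordal_edges G \<sigma>) q s t \<and> up_down (rank G \<sigma>) q \<and> path_len m q \<le> path_len m p"
proof (induction p rule: length_induct)
  case (1 p)
  show ?case
  proof (cases "has_valley (rank G \<sigma>) p")
    case True
    then obtain xs x z y ys where p: "p = xs @ x # z # y # ys"
      and zx: "rank G \<sigma> z < rank G \<sigma> x" and zy: "rank G \<sigma> z < rank G \<sigma> y"
      unfolding has_valley_def by blast
    have "x \<noteq> y" using "1.prems" p by (simp add: is_path_def)
    have edges: "{x, z} \<in> chordal_edges G \<sigma>" "{z, y} \<in> chordal_edges G \<sigma>"
      using "1.prems" p by (auto simp: is_path_def path_edges_valley)
    then have "{x, y} \<in> chordal_edges G \<sigma>"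
      using chordal_edges_fill_in[OF sg vo \<open>x \<noteq> y\<close>] zx zy by blast
    moreover have "m {x, y} \<le> m {x, z} + m {z, y}"
      using lt calculation edges zx zy unfolding lower_triangle_def by blast
    ultimately have "is_path (chordal_edges G \<sigma>) (xs @ x # y # ys) s t"
      and "path_len m (xs @ x # y # ys) \<le> path_len m p"
      using shortcut_valley[where m = m] "1.prems" unfolding p by blast+
    moreover have "length (xs @ x # y # ys) < length p" using p by simp
    ultimately show ?thesis using "1.IH" by (meson order.trans)
  next
    case False
    have "inj_on (rank G \<sigma>) (set p)"
      using inj_on_subset[OF inj_on_rank[OF vo] chordal_path_vertices[OF sg s "1.prems"]] .
    then have "distinct (map (rank G \<sigma>) p)"
      using "1.prems" by (simp add: distinct_map is_path_def)
    then have "up_down (rank G \<sigma>) p"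
      using up_down_if_no_valley False "1.prems" by (auto simp: is_path_def)
    then show ?thesis using "1.prems" by blast
  qed
qed

lemma dist_A_attained:
  assumes sg: "simple_graph G" and con: "connected G" and s: "s \<in> fst G" and t: "t \<in> fst G"
  shows "\<exists>p. is_path (chordal_edges G \<sigma>) p s t \<and> path_len m p = dist_A G \<sigma> m s t"
proof -
  let ?P = "{p. is_path (chordal_edges G \<sigma>) p s t}"
  obtain p where "is_path (snd G) p s t" using con s t by (auto simp: connected_def)
  then have "p \<in> ?P"
    using edges_subset_chordal_edges[OF sg] s by (auto simp: is_path_def)
  then have "Inf (path_len m ` ?P) \<in> path_len m ` ?P"
    using finite_chordal_paths[OF sg s] by (intro finite_Inf_in) (auto simp: inf_min min_def)
  then show ?thesis by (auto simp: dist_A_def)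
qed

lemma up_down_path_attains_dist_A:
  assumes sg: "simple_graph G" and con: "connected G" and vo: "vertex_order G \<sigma>"
    and lt: "lower_triangle G \<sigma> m" and s: "s \<in> fst G" and t: "t \<in> fst G"
  shows "\<exists>q. is_path (chordal_edges G \<sigma>) q s t \<and> up_down (rank G \<sigma>) q \<and>
    path_len m q = dist_A G \<sigma> m s t"
proof -
  obtain p where p: "is_path (chordal_edges G \<sigma>) p s t" "path_len m p = dist_A G \<sigma> m s t"
    using dist_A_attained[OF sg con s t] by blast
  obtain q where q: "is_path (chordal_edges G \<sigma>) q s t" "up_down (rank G \<sigma>) q"
    "path_len m q \<le> path_len m p"
    using exists_up_down_path_le[OF sg vo lt s p(1)] by blast
  have "dist_A G \<sigma> m s t \<le> path_len m q"
    unfolding dist_A_def using q(1) by (auto intro: INF_lower)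
  then show ?thesis using p(2) q by (metis antisym)
qed

theorem mainTheorem5:
  fixes G :: "'a graph" and w :: "'a set \<Rightarrow> real" and \<sigma> :: "nat \<Rightarrow> 'a"
    and m :: "'a set \<Rightarrow> ereal"
  assumes "simple_graph G" and "connected G"
    and "\<forall>e \<in> snd G. w e > 0"
    and "vertex_order G \<sigma>"
    and "is_metric G \<sigma> m"
    and "respects_w G \<sigma> m w"
    and "lower_triangle G \<sigma> m"
  shows "customized G \<sigma> m w \<and>
    (\<forall>s \<in> fst G. \<forall>t \<in> fst G. \<exists>p. is_path (chordal_edges G \<sigma>) p s t \<and>
        up_down (rank G \<sigma>) p \<and> path_len m p = dist_I G w s t)"
proof -
  note up_down_path = up_down_path_attains_dist_A[OF assms(1,2,4,7)]
  have "dist_UD G \<sigma> m s t = dist_A G \<sigma> m s t" if "s \<in> fst G" "t \<in> fst G" for s t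
  proof (rule antisym)
    show "dist_UD G \<sigma> m s t \<le> dist_A G \<sigma> m s t"
      using up_down_path[OF that] unfolding dist_UD_def by (auto intro: INF_lower2)
    show "dist_A G \<sigma> m s t \<le> dist_UD G \<sigma> m s t"
      unfolding dist_UD_def dist_A_def by (rule INF_superset_mono) auto
  qed
  then show ?thesis
    using assms(6) up_down_path unfolding customized_def respects_w_def by metis
qed

end
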